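(* Let $V$ be any Gödel set, let $Q\bar x\,A(\bar x)$ be a prenex sentence with quantifier prefix $Q\bar x$ and quantifier-free matrix $A$, and let $\Gamma$ be a set of sentences not containing the Skolem symbols introduced below. Then $\Gamma\Vdash_V Q\bar x\,A(\bar x)$ if and only if $\Gamma\Vdash_V (Q\bar x\,A(\bar x))^S$.
   Context: A Gödel set is a closed set $V\subseteq[0,1]$ with $0,1\in V$. A $V$-interpretation $\mathcal I$ consists of a nonempty domain $U$, interpretations of constants and function symbols as usual, and for each $k$-ary predicate a function $U^k\to V$; with constants for elements of $U$ added, $\mathcal I(\bot)=0$, $\wedge,\vee$ are $\min,\max$, $\mathcal I(A\supset B)=1$ if $\mathcal I(A)\le\mathcal I(B)$ and $=\mathcal I(B)$ otherwise, $\mathcal I(\forall xA(x))=\inf_{u\in U}\mathcal I(A(u))$, $\mathcal I(\exists xA(x))=\sup_{u\in U}\mathcal I(A(u))$. For a set $\Gamma$ of sentences, $\Gamma\Vdash_V A$ means: every $V$-interpretation that gives value $1$ to all members of $\Gamma$ gives value $1$ to $A$. The validity Skolemization $(Q\bar x A)^S$ of a prenex sentence is obtained by deleting each universal quantifier $\forall y$ from the prefix and replacing $y$ in the matrix by $f(\bar z)$, where $f$ is a new function symbol (distinct for each such quantifier) and $\bar z$ is the list of existentially quantified variables preceding $\forall y$ in the prefix ($f$ is a new constant if $\bar z$ is empty). The result is purely existential. *)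

theory Defs
  imports Complex_Main
begin

datatype 'f trm = Var nat | Fn 'f "'f trm list"

datatype ('f, 'p) fm =
    Bot
  | Pred 'p "'f trm list"
  | And "('f, 'p) fm" "('f, 'p) fm"
  | Or "('f, 'p) fm" "('f, 'p) fm"
  | Imp "('f, 'p) fm" "('f, 'p) fm"
  | All nat "('f, 'p) fm"
  | Ex nat "('f, 'p) fm"

fun fvt :: "'f trm \<Rightarrow> nat set" where
  "fvt (Var x) = {x}"
| "fvt (Fn f ts) = (\<Union>t\<in>set ts. fvt t)"

fun fv :: "('f, 'p) fm \<Rightarrow> nat set" where
  "fv Bot = {}"
| "fv (Pred p ts) = (\<Union>t\<in>set ts. fvt t)"
| "fv (And A B) = fv A \<union> fv B"
| "fv (Or A B) = fv A \<union> fv B"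
| "fv (Imp A B) = fv A \<union> fv B"
| "fv (All x A) = fv A - {x}"
| "fv (Ex x A) = fv A - {x}"

definition sentence :: "('f, 'p) fm \<Rightarrow> bool" where
  "sentence A \<longleftrightarrow> fv A = {}"

fun fsymst :: "'f trm \<Rightarrow> 'f set" where
  "fsymst (Var x) = {}"
| "fsymst (Fn f ts) = insert f (\<Union>t\<in>set ts. fsymst t)"

fun fsyms :: "('f, 'p) fm \<Rightarrow> 'f set" where
  "fsyms Bot = {}"
| "fsyms (Pred p ts) = (\<Union>t\<in>set ts. fsymst t)"
| "fsyms (And A B) = fsyms A \<union> fsyms B"
| "fsyms (Or A B) = fsyms A \<union> fsyms B"
| "fsyms (Imp A B) = fsyms A \<union> fsyms B"
| "fsyms (All x A) = fsyms A"
| "fsyms (Ex x A) = fsyms A"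

fun qfree :: "('f, 'p) fm \<Rightarrow> bool" where
  "qfree Bot = True"
| "qfree (Pred p ts) = True"
| "qfree (And A B) = (qfree A \<and> qfree B)"
| "qfree (Or A B) = (qfree A \<and> qfree B)"
| "qfree (Imp A B) = (qfree A \<and> qfree B)"
| "qfree (All x A) = False"
| "qfree (Ex x A) = False"

datatype quant = QAll | QEx

fun qapp :: "quant \<times> nat \<Rightarrow> ('f, 'p) fm \<Rightarrow> ('f, 'p) fm" where
  "qapp (QAll, x) B = All x B"
| "qapp (QEx, x) B = Ex x B"

definition prenex :: "(quant \<times> nat) list \<Rightarrow> ('f, 'p) fm \<Rightarrow> ('f, 'p) fm" where
  "prenex qs A = foldr qapp qs A"

fun substt :: "(nat \<Rightarrow> 'f trm) \<Rightarrow> 'f trm \<Rightarrow> 'f trm" where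
  "substt \<sigma> (Var x) = \<sigma> x"
| "substt \<sigma> (Fn f ts) = Fn f (map (substt \<sigma>) ts)"

text \<open>Substitution; only applied to quantifier-free matrices.\<close>
fun substf :: "(nat \<Rightarrow> 'f trm) \<Rightarrow> ('f, 'p) fm \<Rightarrow> ('f, 'p) fm" where
  "substf \<sigma> Bot = Bot"
| "substf \<sigma> (Pred p ts) = Pred p (map (substt \<sigma>) ts)"
| "substf \<sigma> (And A B) = And (substf \<sigma> A) (substf \<sigma> B)"
| "substf \<sigma> (Or A B) = Or (substf \<sigma> A) (substf \<sigma> B)"
| "substf \<sigma> (Imp A B) = Imp (substf \<sigma> A) (substf \<sigma> B)"
| "substf \<sigma> (All x A) = All x (substf (\<sigma>(x := Var x)) A)"
| "substf \<sigma> (Ex x A) = Ex x (substf (\<sigma>(x := Var x)) A)"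

text \<open>skol sk i zs \<sigma> qs A: i = position in the prefix, zs = existential variables
  seen so far (in order), \<sigma> = substitution accumulated for deleted universal variables.\<close>
fun skol :: "(nat \<Rightarrow> 'f) \<Rightarrow> nat \<Rightarrow> nat list \<Rightarrow> (nat \<Rightarrow> 'f trm) \<Rightarrow> (quant \<times> nat) list
    \<Rightarrow> ('f, 'p) fm \<Rightarrow> ('f, 'p) fm" where
  "skol sk i zs \<sigma> [] A = substf \<sigma> A"
| "skol sk i zs \<sigma> ((QEx, x) # qs) A = Ex x (skol sk (Suc i) (zs @ [x]) \<sigma> qs A)"
| "skol sk i zs \<sigma> ((QAll, y) # qs) A =
     skol sk (Suc i) zs (\<sigma>(y := Fn (sk i) (map Var zs))) qs A"

definition skolemize :: "(nat \<Rightarrow> 'f) \<Rightarrow> (quant \<times> nat) list \<Rightarrow> ('f, 'p) fm \<Rightarrow> ('f, 'p) fm" where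
  "skolemize sk qs A = skol sk 0 [] Var qs A"

definition univ_pos :: "(quant \<times> nat) list \<Rightarrow> nat set" where
  "univ_pos qs = {i. i < length qs \<and> fst (qs ! i) = QAll}"

definition skolem_syms :: "(nat \<Rightarrow> 'f) \<Rightarrow> (quant \<times> nat) list \<Rightarrow> 'f set" where
  "skolem_syms sk qs = sk ` univ_pos qs"

definition goedel_set :: "real set \<Rightarrow> bool" where
  "goedel_set V \<longleftrightarrow> closed V \<and> V \<subseteq> {0..1} \<and> 0 \<in> V \<and> 1 \<in> V"

record ('u, 'f, 'p) intp =
  dom :: "'u set"
  fint :: "'f \<Rightarrow> 'u list \<Rightarrow> 'u"
  pint :: "'p \<Rightarrow> 'u list \<Rightarrow> real"

definition is_Vinterp :: "real set \<Rightarrow> ('u, 'f, 'p) intp \<Rightarrow> bool" where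
  "is_Vinterp V I \<longleftrightarrow> dom I \<noteq> {}
     \<and> (\<forall>f us. set us \<subseteq> dom I \<longrightarrow> fint I f us \<in> dom I)
     \<and> (\<forall>p us. set us \<subseteq> dom I \<longrightarrow> pint I p us \<in> V)"

fun evalt :: "('u, 'f, 'p) intp \<Rightarrow> (nat \<Rightarrow> 'u) \<Rightarrow> 'f trm \<Rightarrow> 'u" where
  "evalt I e (Var x) = e x"
| "evalt I e (Fn f ts) = fint I f (map (evalt I e) ts)"

fun evalf :: "('u, 'f, 'p) intp \<Rightarrow> (nat \<Rightarrow> 'u) \<Rightarrow> ('f, 'p) fm \<Rightarrow> real" where
  "evalf I e Bot = 0"
| "evalf I e (Pred p ts) = pint I p (map (evalt I e) ts)"
| "evalf I e (And A B) = min (evalf I e A) (evalf I e B)"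
| "evalf I e (Or A B) = max (evalf I e A) (evalf I e B)"
| "evalf I e (Imp A B) = (if evalf I e A \<le> evalf I e B then 1 else evalf I e B)"
| "evalf I e (All x A) = (INF u\<in>dom I. evalf I (e(x := u)) A)"
| "evalf I e (Ex x A) = (SUP u\<in>dom I. evalf I (e(x := u)) A)"

definition holds :: "('u, 'f, 'p) intp \<Rightarrow> ('f, 'p) fm \<Rightarrow> bool" where
  "holds I A \<longleftrightarrow> (\<forall>e. range e \<subseteq> dom I \<longrightarrow> evalf I e A = 1)"

text \<open>Gamma entails A over V, for interpretations whose domain lives in type 'u.\<close>
definition entails :: "'u itself \<Rightarrow> real set \<Rightarrow> ('f, 'p) fm set \<Rightarrow> ('f, 'p) fm \<Rightarrow> bool" where
  "entails _ V \<Gamma> A \<longleftrightarrow>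
     (\<forall>I :: ('u, 'f, 'p) intp. is_Vinterp V I \<and> (\<forall>B\<in>\<Gamma>. holds I B) \<longrightarrow> holds I A)"

end

theory Submission
  imports Defs
begin

(* Interpreting the Skolem symbols by functions G turns the Skolemization into the prenex sentence
   with each universal quantifier instantiated by G applied to the values of the preceding
   existential variables (skolem_value). An instance never lies below the infimum it replaces, so
   a model of the prenex sentence also satisfies the Skolemization. Conversely, if the prenex
   sentence has value below 1, the universal quantifiers can be given witnesses, depending on the
   preceding existential values, that keep the instance below 1; since suprema need not be
   attained, the threshold is lowered at each existential quantifier. Interpreting the Skolem
   symbols by these witnesses leaves Gamma untouched and refutes the Skolemization. *)

lemma quant_prefix_induct [case_names Nil Ex All]:
  assumes "P []"
    and "\<And>x qs. P qs \<Longrightarrow> P ((QEx, x) # qs)"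
    and "\<And>y qs. P qs \<Longrightarrow> P ((QAll, y) # qs)"
  shows "P qs"
proof (induction qs)
  case (Cons q qs)
  obtain k x where "q = (k, x)" by fastforce
  then show ?case using Cons assms(2,3) by (cases k) auto
qed (rule assms(1))

lemma prenex_simps [simp]:
  "prenex [] A = A"
  "prenex ((QEx, x) # qs) A = Ex x (prenex qs A)"
  "prenex ((QAll, y) # qs) A = All y (prenex qs A)"
  by (simp_all add: prenex_def)

lemma zero_in_univ_pos_Cons [simp]: "0 \<in> univ_pos (q # qs) \<longleftrightarrow> fst q = QAll"
  by (simp add: univ_pos_def)

lemma Suc_in_univ_pos_Cons [simp]: "Suc k \<in> univ_pos (q # qs) \<longleftrightarrow> k \<in> univ_pos qs"
  by (simp add: univ_pos_def)

lemma Inf_Sup_in_unit_interval: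
  fixes S :: "real set"
  assumes "S \<noteq> {}" and "S \<subseteq> {0..1}"
  shows "Inf S \<in> {0..1}" and "Sup S \<in> {0..1}"
proof -
  obtain s where "s \<in> S" using assms(1) by blast
  moreover have "bdd_below S" "bdd_above S"
    using assms(2) by (meson bdd_below_Icc bdd_below_mono, meson bdd_above_Icc bdd_above_mono)
  ultimately show "Inf S \<in> {0..1}" "Sup S \<in> {0..1}"
    using assms by (auto intro!: cInf_greatest cSup_least cInf_lower2 cSup_upper2)
qed

lemma is_Vinterp_dom_nonempty: "is_Vinterp V I \<Longrightarrow> dom I \<noteq> {}"
  by (simp add: is_Vinterp_def)

lemma evalt_in_dom:
  assumes "is_Vinterp V I" and "range e \<subseteq> dom I"
  shows "evalt I e t \<in> dom I"
proof (induction t)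
  case (Fn f ts)
  then have "set (map (evalt I e) ts) \<subseteq> dom I" by auto
  then show ?case using assms(1) by (simp add: is_Vinterp_def)
qed (use assms(2) in auto)

lemma evalf_in_unit_interval:
  assumes "is_Vinterp V I" and "V \<subseteq> {0..1}" and "range e \<subseteq> dom I"
  shows "evalf I e F \<in> {0..1}"
  using assms(3)
proof (induction F arbitrary: e)
  case (Pred p ts)
  then have "set (map (evalt I e) ts) \<subseteq> dom I" using evalt_in_dom[OF assms(1)] by auto
  then have "pint I p (map (evalt I e) ts) \<in> V" using assms(1) by (simp add: is_Vinterp_def)
  then show ?case using assms(2) by auto
next
  case (All x F)
  then show ?case using is_Vinterp_dom_nonempty[OF assms(1)]
    by (simp add: Inf_Sup_in_unit_interval image_subset_iff del: atLeastAtMost_iff)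
next
  case (Ex x F)
  then show ?case using is_Vinterp_dom_nonempty[OF assms(1)]
    by (simp add: Inf_Sup_in_unit_interval image_subset_iff del: atLeastAtMost_iff)
qed (auto simp: min_def max_def)

lemma evalt_cong_fv: "(\<forall>v\<in>fvt t. e v = e' v) \<Longrightarrow> evalt I e t = evalt I e' t"
  by (induction t) (auto cong: map_cong)

lemma evalt_cong_fint: "(\<forall>f\<in>fsymst t. fint J f = fint I f) \<Longrightarrow> evalt J e t = evalt I e t"
  by (induction t) (auto cong: map_cong)

lemma evalf_cong_fint:
  assumes "dom J = dom I" and "pint J = pint I" and "\<forall>f\<in>fsyms F. fint J f = fint I f"
  shows "evalf J e F = evalf I e F"
  using assms(3)
proof (induction F arbitrary: e)
  case (Pred p ts)
  then have "map (evalt J e) ts = map (evalt I e) ts" using evalt_cong_fint by fastforce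
  then show ?case by (simp only: evalf.simps assms(2))
qed (simp_all add: assms(1))

lemma evalt_substt: "evalt I e (substt \<sigma> t) = evalt I (\<lambda>v. evalt I e (\<sigma> v)) t"
  by (induction t) (auto cong: map_cong)

lemma evalf_substf: "qfree A \<Longrightarrow> evalf I e (substf \<sigma> A) = evalf I (\<lambda>v. evalt I e (\<sigma> v)) A"
  by (induction A) (auto simp: evalt_substt cong: map_cong)

(* The invariant of the substitution accumulated by skol, X being the variables still quantified. *)
definition subst_fixes :: "(nat \<Rightarrow> 'f trm) \<Rightarrow> nat set \<Rightarrow> bool" where
  "subst_fixes \<sigma> X \<longleftrightarrow> (\<forall>x\<in>X. \<sigma> x = Var x \<and> (\<forall>v. x \<in> fvt (\<sigma> v) \<longrightarrow> v = x))"

lemma subst_fixes_Var: "subst_fixes Var X"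
  by (simp add: subst_fixes_def)

lemma subst_fixes_subset: "subst_fixes \<sigma> X \<Longrightarrow> Y \<subseteq> X \<Longrightarrow> subst_fixes \<sigma> Y"
  by (auto simp: subst_fixes_def)

lemma subst_fixes_upd:
  "subst_fixes \<sigma> X \<Longrightarrow> y \<notin> X \<Longrightarrow> fvt t \<inter> X = {} \<Longrightarrow> subst_fixes (\<sigma>(y := t)) X"
  by (auto simp: subst_fixes_def)

lemma evalt_subst_fixes_upd:
  assumes "subst_fixes \<sigma> X" and "x \<in> X"
  shows "(\<lambda>v. evalt I (e(x := u)) (\<sigma> v)) = (\<lambda>v. evalt I e (\<sigma> v))(x := u)"
proof
  fix v
  show "evalt I (e(x := u)) (\<sigma> v) = ((\<lambda>v. evalt I e (\<sigma> v))(x := u)) v"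
  proof (cases "v = x")
    case False
    then have "x \<notin> fvt (\<sigma> v)" using assms by (auto simp: subst_fixes_def)
    then show ?thesis using False by (auto intro: evalt_cong_fv)
  qed (use assms in \<open>simp add: subst_fixes_def\<close>)
qed

definition skolem_funs_on :: "'u set \<Rightarrow> (nat \<Rightarrow> 'u list \<Rightarrow> 'u) \<Rightarrow> bool" where
  "skolem_funs_on D G \<longleftrightarrow> (\<forall>j ws. set ws \<subseteq> D \<longrightarrow> G j ws \<in> D)"

fun skolem_value :: "('u, 'f, 'p) intp \<Rightarrow> (nat \<Rightarrow> 'u list \<Rightarrow> 'u) \<Rightarrow> nat \<Rightarrow> 'u list \<Rightarrow> (nat \<Rightarrow> 'u)
    \<Rightarrow> (quant \<times> nat) list \<Rightarrow> ('f, 'p) fm \<Rightarrow> real" where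
  "skolem_value I G i ws e [] A = evalf I e A"
| "skolem_value I G i ws e ((QEx, x) # qs) A =
     (SUP u\<in>dom I. skolem_value I G (Suc i) (ws @ [u]) (e(x := u)) qs A)"
| "skolem_value I G i ws e ((QAll, y) # qs) A = skolem_value I G (Suc i) ws (e(y := G i ws)) qs A"

lemma skolem_value_cong:
  assumes "dom J = dom I" and "pint J = pint I" and "\<forall>f\<in>fsyms A. fint J f = fint I f"
  shows "\<forall>k\<in>univ_pos qs. \<forall>vs. G (i + k) (ws @ vs) = G' (i + k) (ws @ vs) \<Longrightarrow>
    skolem_value J G i ws e qs A = skolem_value I G' i ws e qs A"
proof (induction qs arbitrary: i ws e rule: quant_prefix_induct)
  case Nil
  then show ?case using evalf_cong_fint[OF assms] by simp
next
  case (Ex x qs)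
  have "skolem_value J G (Suc i) (ws @ [u]) (e(x := u)) qs A
      = skolem_value I G' (Suc i) (ws @ [u]) (e(x := u)) qs A" for u
  proof (rule Ex.IH, intro ballI allI)
    fix k vs assume "k \<in> univ_pos qs"
    then show "G (Suc i + k) ((ws @ [u]) @ vs) = G' (Suc i + k) ((ws @ [u]) @ vs)"
      using Ex.prems[rule_format, of "Suc k" "u # vs"] by simp
  qed
  then show ?case using assms(1) by simp
next
  case (All y qs)
  have "G i ws = G' i ws" using All.prems[rule_format, of 0 "[]"] by simp
  moreover have "skolem_value J G (Suc i) ws e' qs A = skolem_value I G' (Suc i) ws e' qs A" for e'
    using All.prems[rule_format, of "Suc k" for k] by (intro All.IH) simp
  ultimately show ?case by simp
qed

lemma skolem_value_in_unit_interval: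
  assumes "is_Vinterp V I" and "V \<subseteq> {0..1}" and "skolem_funs_on (dom I) G"
  shows "set ws \<subseteq> dom I \<Longrightarrow> range e \<subseteq> dom I \<Longrightarrow> skolem_value I G i ws e qs A \<in> {0..1}"
proof (induction qs arbitrary: i ws e rule: quant_prefix_induct)
  case Nil
  then show ?case using evalf_in_unit_interval[OF assms(1,2)] by simp
next
  case (Ex x qs)
  then show ?case using is_Vinterp_dom_nonempty[OF assms(1)]
    by (simp add: Inf_Sup_in_unit_interval image_subset_iff del: atLeastAtMost_iff)
next
  case (All y qs)
  then have "G i ws \<in> dom I" using assms(3) by (simp add: skolem_funs_on_def)
  then have "range (e(y := G i ws)) \<subseteq> dom I" using All.prems(2) by auto
  then show ?case using All.IH All.prems(1) by simp
qed

lemma evalf_prenex_le_skolem_value: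
  assumes "is_Vinterp V I" and "V \<subseteq> {0..1}" and "skolem_funs_on (dom I) G"
  shows "set ws \<subseteq> dom I \<Longrightarrow> range e \<subseteq> dom I \<Longrightarrow>
    evalf I e (prenex qs A) \<le> skolem_value I G i ws e qs A"
proof (induction qs arbitrary: i ws e rule: quant_prefix_induct)
  case (Ex x qs)
  have upd: "set (ws @ [u]) \<subseteq> dom I" "range (e(x := u)) \<subseteq> dom I" if "u \<in> dom I" for u
    using that Ex.prems by auto
  have "bdd_above ((\<lambda>u. skolem_value I G (Suc i) (ws @ [u]) (e(x := u)) qs A) ` dom I)"
    using upd skolem_value_in_unit_interval[OF assms] by (auto intro!: bdd_aboveI2[where M = 1])
  moreover have "evalf I (e(x := u)) (prenex qs A)
      \<le> skolem_value I G (Suc i) (ws @ [u]) (e(x := u)) qs A" if "u \<in> dom I" for u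
    using upd[OF that] by (rule Ex.IH)
  ultimately show ?case using is_Vinterp_dom_nonempty[OF assms(1)] by (auto intro!: cSUP_mono)
next
  case (All y qs)
  have upd: "range (e(y := u)) \<subseteq> dom I" if "u \<in> dom I" for u
    using that All.prems by auto
  have "bdd_below ((\<lambda>u. evalf I (e(y := u)) (prenex qs A)) ` dom I)"
    using upd evalf_in_unit_interval[OF assms(1,2)] by (auto intro!: bdd_belowI2[where m = 0])
  moreover have "G i ws \<in> dom I" using All.prems assms(3) by (simp add: skolem_funs_on_def)
  ultimately show ?case using All upd by (auto intro: cINF_lower2)
qed simp

lemma ex_skolem_funs_below:
  assumes "is_Vinterp V I" and "V \<subseteq> {0..1}"
  shows "range e \<subseteq> dom I \<Longrightarrow> evalf I e (prenex qs A) < d \<Longrightarrow>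
    \<exists>G. skolem_funs_on (dom I) G \<and> skolem_value I G i ws e qs A < d"
proof (induction qs arbitrary: i ws e d rule: quant_prefix_induct)
  case Nil
  obtain c where "c \<in> dom I" using is_Vinterp_dom_nonempty[OF assms(1)] by blast
  then have "skolem_funs_on (dom I) (\<lambda>_ _. c)" by (simp add: skolem_funs_on_def)
  then show ?case using Nil by auto
next
  case (Ex x qs)
  have upd: "range (e(x := u)) \<subseteq> dom I" if "u \<in> dom I" for u
    using that Ex.prems(1) by auto
  \<comment> \<open>The supremum need not be attained, so the witnesses are only kept below the midpoint d'.\<close>
  define s where "s = (SUP u\<in>dom I. evalf I (e(x := u)) (prenex qs A))"
  define d' where "d' = (s + d) / 2"
  have "s < d" using Ex.prems(2) by (simp add: s_def)
  then have "s < d'" "d' < d" by (simp_all add: d'_def)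
  have bdd: "bdd_above ((\<lambda>u. evalf I (e(x := u)) (prenex qs A)) ` dom I)"
    using upd evalf_in_unit_interval[OF assms] by (auto intro!: bdd_aboveI2[where M = 1])
  have "\<forall>u\<in>dom I. \<exists>G. skolem_funs_on (dom I) G
      \<and> skolem_value I G (Suc i) (ws @ [u]) (e(x := u)) qs A < d'"
  proof
    fix u assume u: "u \<in> dom I"
    have "evalf I (e(x := u)) (prenex qs A) < d'"
      using cSUP_upper[OF u bdd] \<open>s < d'\<close> unfolding s_def by linarith
    then show "\<exists>G. skolem_funs_on (dom I) G \<and> skolem_value I G (Suc i) (ws @ [u]) (e(x := u)) qs A < d'"
      by (rule Ex.IH[OF upd[OF u]])
  qed
  then obtain Gu where Gu: "\<forall>u\<in>dom I. skolem_funs_on (dom I) (Gu u)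
      \<and> skolem_value I (Gu u) (Suc i) (ws @ [u]) (e(x := u)) qs A < d'"
    by (rule bchoice[THEN exE])
  obtain c where c: "c \<in> dom I" using is_Vinterp_dom_nonempty[OF assms(1)] by blast
  define G where "G j vs = Gu (if vs ! length ws \<in> dom I then vs ! length ws else c) j vs" for j vs
  have "skolem_funs_on (dom I) G" using Gu c by (simp add: G_def skolem_funs_on_def)
  moreover have "skolem_value I G (Suc i) (ws @ [u]) (e(x := u)) qs A < d'" if "u \<in> dom I" for u
  proof -
    have "skolem_value I G (Suc i) (ws @ [u]) (e(x := u)) qs A
        = skolem_value I (Gu u) (Suc i) (ws @ [u]) (e(x := u)) qs A"
      using that by (intro skolem_value_cong) (simp_all add: G_def nth_append)
    then show ?thesis using Gu that by simp
  qed
  then have "skolem_value I G i ws e ((QEx, x) # qs) A \<le> d'"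
    using c by (force intro: cSUP_least less_imp_le)
  ultimately show ?case using \<open>d' < d\<close> by force
next
  case (All y qs)
  have upd: "range (e(y := u)) \<subseteq> dom I" if "u \<in> dom I" for u
    using that All.prems(1) by auto
  have "bdd_below ((\<lambda>u. evalf I (e(y := u)) (prenex qs A)) ` dom I)"
    using upd evalf_in_unit_interval[OF assms] by (auto intro!: bdd_belowI2[where m = 0])
  moreover note is_Vinterp_dom_nonempty[OF assms(1)]
  ultimately obtain u where u: "u \<in> dom I" "evalf I (e(y := u)) (prenex qs A) < d"
    using All.prems(2) by (auto simp: cINF_less_iff)
  then obtain G where G: "skolem_funs_on (dom I) G"
    "skolem_value I G (Suc i) ws (e(y := u)) qs A < d"
    using All.IH[OF upd] by blast
  have "skolem_funs_on (dom I) (G(i := \<lambda>_. u))" using G(1) u(1) by (simp add: skolem_funs_on_def)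
  moreover have "skolem_value I (G(i := \<lambda>_. u)) (Suc i) ws (e(y := u)) qs A
      = skolem_value I G (Suc i) ws (e(y := u)) qs A"
    by (intro skolem_value_cong) simp_all
  ultimately show ?case
    using G(2) by (intro exI[of _ "G(i := \<lambda>_. u)"]) (simp del: fun_upd_apply add: fun_upd_same)
qed

lemma evalf_skol:
  assumes "qfree A"
  shows "distinct (map snd qs) \<Longrightarrow> subst_fixes \<sigma> (snd ` set qs) \<Longrightarrow> set zs \<inter> snd ` set qs = {} \<Longrightarrow>
    evalf J e (skol sk i zs \<sigma> qs A)
      = skolem_value J (\<lambda>j. fint J (sk j)) i (map e zs) (\<lambda>v. evalt J e (\<sigma> v)) qs A"
proof (induction qs arbitrary: i zs \<sigma> e rule: quant_prefix_induct)
  case Nil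
  then show ?case using evalf_substf[OF assms] by simp
next
  case (Ex x qs)
  have "x \<notin> set zs" using Ex.prems(3) by auto
  then have zs: "map (e(x := u)) zs = map e zs" for u by simp
  have \<sigma>: "(\<lambda>v. evalt J (e(x := u)) (\<sigma> v)) = (\<lambda>v. evalt J e (\<sigma> v))(x := u)" for u
    using Ex.prems(2) by (rule evalt_subst_fixes_upd) simp
  have "evalf J e' (skol sk (Suc i) (zs @ [x]) \<sigma> qs A)
      = skolem_value J (\<lambda>j. fint J (sk j)) (Suc i) (map e' (zs @ [x])) (\<lambda>v. evalt J e' (\<sigma> v)) qs A" for e'
    using Ex.prems by (intro Ex.IH) (auto elim: subst_fixes_subset)
  then show ?case by (simp add: zs \<sigma>)
next
  case (All y qs)
  let ?\<sigma>' = "\<sigma>(y := Fn (sk i) (map Var zs))"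
  have fixes': "subst_fixes ?\<sigma>' (snd ` set qs)"
    using All.prems by (intro subst_fixes_upd) (auto elim: subst_fixes_subset)
  have "evalf J e (skol sk (Suc i) zs ?\<sigma>' qs A)
      = skolem_value J (\<lambda>j. fint J (sk j)) (Suc i) (map e zs) (\<lambda>v. evalt J e (?\<sigma>' v)) qs A"
    using All.prems by (intro All.IH[OF _ fixes']) auto
  moreover have "(\<lambda>v. evalt J e (?\<sigma>' v)) = (\<lambda>v. evalt J e (\<sigma> v))(y := fint J (sk i) (map e zs))"
    by (auto simp: comp_def)
  ultimately show ?case by simp
qed

lemma evalf_skolemize:
  "qfree A \<Longrightarrow> distinct (map snd qs) \<Longrightarrow>
    evalf J e (skolemize sk qs A) = skolem_value J (\<lambda>j. fint J (sk j)) 0 [] e qs A"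
  using evalf_skol[of A qs Var "[]" J e sk 0] by (simp add: skolemize_def subst_fixes_Var)

definition interpret_skolem :: "(nat \<Rightarrow> 'f) \<Rightarrow> nat set \<Rightarrow> (nat \<Rightarrow> 'u list \<Rightarrow> 'u)
    \<Rightarrow> ('u, 'f, 'p) intp \<Rightarrow> ('u, 'f, 'p) intp" where
  "interpret_skolem sk U G I = I\<lparr>fint := \<lambda>f. if f \<in> sk ` U then G (inv_into U sk f) else fint I f\<rparr>"

lemma dom_interpret_skolem [simp]: "dom (interpret_skolem sk U G I) = dom I"
  and pint_interpret_skolem [simp]: "pint (interpret_skolem sk U G I) = pint I"
  by (simp_all add: interpret_skolem_def)

lemma fint_interpret_skolem_sk:
  "inj_on sk U \<Longrightarrow> j \<in> U \<Longrightarrow> fint (interpret_skolem sk U G I) (sk j) = G j"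
  by (simp add: interpret_skolem_def)

lemma fint_interpret_skolem_other:
  "f \<notin> sk ` U \<Longrightarrow> fint (interpret_skolem sk U G I) f = fint I f"
  by (simp add: interpret_skolem_def)

lemma is_Vinterp_interpret_skolem:
  "is_Vinterp V I \<Longrightarrow> skolem_funs_on (dom I) G \<Longrightarrow> is_Vinterp V (interpret_skolem sk U G I)"
  by (simp add: is_Vinterp_def skolem_funs_on_def interpret_skolem_def)

lemma evalf_interpret_skolem:
  "fsyms F \<inter> sk ` U = {} \<Longrightarrow> evalf (interpret_skolem sk U G I) e F = evalf I e F"
  by (rule evalf_cong_fint) (auto intro!: fint_interpret_skolem_other)

lemma entailsI:
  assumes "\<And>(I :: ('u, 'f, 'p) intp) e. is_Vinterp V I \<Longrightarrow> \<forall>B\<in>\<Gamma>. holds I B \<Longrightarrow>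
    range e \<subseteq> dom I \<Longrightarrow> evalf I e A = 1"
  shows "entails TYPE('u) V \<Gamma> A"
  using assms by (auto simp: entails_def holds_def)

lemma entailsD:
  fixes I :: "('u, 'f, 'p) intp"
  assumes "entails TYPE('u) V \<Gamma> A" and "is_Vinterp V I" and "\<forall>B\<in>\<Gamma>. holds I B"
    and "range e \<subseteq> dom I"
  shows "evalf I e A = 1"
  using assms by (auto simp: entails_def holds_def)

lemma entails_skolemize_if_entails_prenex:
  fixes A :: "('f, 'p) fm"
  assumes "V \<subseteq> {0..1}" and "qfree A" and "distinct (map snd qs)"
    and "entails TYPE('u) V \<Gamma> (prenex qs A)"
  shows "entails TYPE('u) V \<Gamma> (skolemize sk qs A)"
proof (rule entailsI)
  fix I :: "('u, 'f, 'p) intp" and e :: "nat \<Rightarrow> 'u"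
  assume I: "is_Vinterp V I" and \<Gamma>: "\<forall>B\<in>\<Gamma>. holds I B" and e: "range e \<subseteq> dom I"
  have "skolem_funs_on (dom I) (\<lambda>j. fint I (sk j))"
    using I by (simp add: is_Vinterp_def skolem_funs_on_def)
  then have "evalf I e (prenex qs A) \<le> skolem_value I (\<lambda>j. fint I (sk j)) 0 [] e qs A"
    using e by (intro evalf_prenex_le_skolem_value[OF I assms(1)]) auto
  then have "evalf I e (prenex qs A) \<le> evalf I e (skolemize sk qs A)"
    by (simp add: evalf_skolemize[OF assms(2,3)])
  moreover have "evalf I e (prenex qs A) = 1" by (rule entailsD[OF assms(4) I \<Gamma> e])
  moreover have "evalf I e (skolemize sk qs A) \<le> 1"
    using evalf_in_unit_interval[OF I assms(1) e] by simp
  ultimately show "evalf I e (skolemize sk qs A) = 1" by simp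
qed

lemma entails_prenex_if_entails_skolemize:
  fixes A :: "('f, 'p) fm"
  assumes "V \<subseteq> {0..1}" and "qfree A" and "distinct (map snd qs)"
    and "inj_on sk (univ_pos qs)"
    and "skolem_syms sk qs \<inter> fsyms A = {}"
    and "\<forall>B\<in>\<Gamma>. skolem_syms sk qs \<inter> fsyms B = {}"
    and "entails TYPE('u) V \<Gamma> (skolemize sk qs A)"
  shows "entails TYPE('u) V \<Gamma> (prenex qs A)"
proof (rule entailsI)
  fix I :: "('u, 'f, 'p) intp" and e :: "nat \<Rightarrow> 'u"
  assume I: "is_Vinterp V I" and \<Gamma>: "\<forall>B\<in>\<Gamma>. holds I B" and e: "range e \<subseteq> dom I"
  show "evalf I e (prenex qs A) = 1"
  proof (rule ccontr)
    assume "evalf I e (prenex qs A) \<noteq> 1"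
    then have "evalf I e (prenex qs A) < 1"
      using evalf_in_unit_interval[OF I assms(1) e, of "prenex qs A"] by simp
    then obtain G where G: "skolem_funs_on (dom I) G" "skolem_value I G 0 [] e qs A < 1"
      using ex_skolem_funs_below[OF I assms(1) e] by blast
    define I' where "I' = interpret_skolem sk (univ_pos qs) G I"
    have "is_Vinterp V I'" using I G(1) by (simp add: I'_def is_Vinterp_interpret_skolem)
    moreover have "\<forall>B\<in>\<Gamma>. holds I' B"
    proof
      fix B assume "B \<in> \<Gamma>"
      then have "fsyms B \<inter> sk ` univ_pos qs = {}" using assms(6) by (auto simp: skolem_syms_def)
      then show "holds I' B" using \<Gamma> \<open>B \<in> \<Gamma>\<close> by (simp add: I'_def holds_def evalf_interpret_skolem)
    qed
    moreover have "range e \<subseteq> dom I'" using e by (simp add: I'_def)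
    ultimately have "evalf I' e (skolemize sk qs A) = 1" by (rule entailsD[OF assms(7)])
    moreover have "evalf I' e (skolemize sk qs A) = skolem_value I G 0 [] e qs A"
    proof -
      have "\<forall>f\<in>fsyms A. fint I' f = fint I f"
        using assms(5) by (auto simp: I'_def skolem_syms_def intro!: fint_interpret_skolem_other)
      moreover have "\<forall>k\<in>univ_pos qs. fint I' (sk k) = G k"
        using assms(4) by (simp add: I'_def fint_interpret_skolem_sk)
      moreover have "dom I' = dom I" "pint I' = pint I" by (simp_all add: I'_def)
      ultimately show ?thesis
        unfolding evalf_skolemize[OF assms(2,3)] by (intro skolem_value_cong) simp_all
    qed
    ultimately show False using G(2) by simp
  qed
qed

theorem lemma4p1:
  fixes V :: "real set"
    and qs :: "(quant \<times> nat) list"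
    and A :: "('f, 'p) fm"
    and \<Gamma> :: "('f, 'p) fm set"
    and sk :: "nat \<Rightarrow> 'f"
  assumes "goedel_set V"
    and "qfree A"
    and "distinct (map snd qs)"
    and "sentence (prenex qs A)"
    and "\<forall>B\<in>\<Gamma>. sentence B"
    and "inj_on sk (univ_pos qs)"
    and "skolem_syms sk qs \<inter> fsyms A = {}"
    and "\<forall>B\<in>\<Gamma>. skolem_syms sk qs \<inter> fsyms B = {}"
  shows "entails TYPE('u) V \<Gamma> (prenex qs A) \<longleftrightarrow> entails TYPE('u) V \<Gamma> (skolemize sk qs A)"
proof -
  \<comment> \<open>holds quantifies over all assignments.\<close>
  have "V \<subseteq> {0..1}" using assms(1) by (simp add: goedel_set_def)
  then show ?thesis
    using entails_skolemize_if_entails_prenex[OF _ assms(2,3)]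
      entails_prenex_if_entails_skolemize[OF _ assms(2,3,6-8)] by blast
qed

end
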